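(* Let $(I,<,\mathcal X,R,\mathrm{Mor})$ be a regular groupoid spine. Then: (1) there is a symmetric set $S$ with $R\subseteq S\subseteq I^2$ such that $(I,<,\mathcal X,R,\mathrm{Mor})$ extends to $S$; (2) in particular, if $|I|\ge 3$ then $(I,<,\mathcal X,R,\mathrm{Mor})$ extends to a groupoid.
   Context: A groupoid spine $(I,<,\mathcal X,R,\mathrm{Mor})$ consists of a linear order $(I,<)$, nonempty sets $\mathcal X=\{X_i:i\in I\}$, a nonempty relation $R\subseteq I^2$ containing all $(i,j)$ with $i<j$, and for each $(i,j)\in R$ a nonempty set $\operatorname{Mor}(i,j)$ of bijections $X_i\to X_j$, such that: if $(i,i)\in R$ then $\mathrm{id}_{X_i}\in\operatorname{Mor}(i,i)$; if $(i,j),(j,i)\in R$ and $f\in\operatorname{Mor}(i,j)$ then $f^{-1}\in\operatorname{Mor}(j,i)$; if $(i,j),(j,k),(i,k)\in R$, $f\in\operatorname{Mor}(i,j)$, $g\in\operatorname{Mor}(j,k)$ then $g\circ f\in\operatorname{Mor}(i,k)$. It is regular if for all $(i,j)\in R$, $x\in X_i$, $y\in X_j$ there is exactly one $f\in\operatorname{Mor}(i,j)$ with $f(x)=y$. For $R\subseteq S\subseteq I^2$, the spine extends to $S$ if one can define $\operatorname{Mor}(i,j)$ for $(i,j)\in S\setminus R$ (keeping $\operatorname{Mor}(i,j)$ unchanged for $(i,j)\in R$) so that $(I,<,\mathcal X,S,\mathrm{Mor})$ is a groupoid spine; it extends to a groupoid if it extends to $S=I^2$. $S$ is symmetric if $(i,j)\in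 S$ implies $(j,i)\in S$. *)

theory Defs
  imports Main "HOL-Library.FuncSet"
begin

text \<open>Morphisms X_i to X_j are represented as extensional functions (value undefined
  outside X_i), so that equality of morphisms is equality as maps X_i to X_j.\<close>

definition strict_linear_on :: "'i set \<Rightarrow> ('i \<Rightarrow> 'i \<Rightarrow> bool) \<Rightarrow> bool" where
  "strict_linear_on I lt \<longleftrightarrow>
     (\<forall>i\<in>I. \<not> lt i i) \<and>
     (\<forall>i\<in>I. \<forall>j\<in>I. \<forall>k\<in>I. lt i j \<longrightarrow> lt j k \<longrightarrow> lt i k) \<and>
     (\<forall>i\<in>I. \<forall>j\<in>I. i \<noteq> j \<longrightarrow> lt i j \<or> lt j i)"

definition groupoid_spine ::
  "'i set \<Rightarrow> ('i \<Rightarrow> 'i \<Rightarrow> bool) \<Rightarrow> ('i \<Rightarrow> 'x set) \<Rightarrow> ('i \<times> 'i) set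
     \<Rightarrow> ('i \<Rightarrow> 'i \<Rightarrow> ('x \<Rightarrow> 'x) set) \<Rightarrow> bool" where
  "groupoid_spine I lt X R Mor \<longleftrightarrow>
     strict_linear_on I lt \<and>
     (\<forall>i\<in>I. X i \<noteq> {}) \<and>
     R \<noteq> {} \<and> R \<subseteq> I \<times> I \<and>
     (\<forall>i\<in>I. \<forall>j\<in>I. lt i j \<longrightarrow> (i, j) \<in> R) \<and>
     (\<forall>(i, j)\<in>R. Mor i j \<noteq> {} \<and>
        (\<forall>f\<in>Mor i j. f \<in> extensional (X i) \<and> bij_betw f (X i) (X j))) \<and>
     (\<forall>i. (i, i) \<in> R \<longrightarrow> (\<lambda>x\<in>X i. x) \<in> Mor i i) \<and>
     (\<forall>i j. (i, j) \<in> R \<longrightarrow> (j, i) \<in> R \<longrightarrow>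
        (\<forall>f\<in>Mor i j. restrict (inv_into (X i) f) (X j) \<in> Mor j i)) \<and>
     (\<forall>i j k. (i, j) \<in> R \<longrightarrow> (j, k) \<in> R \<longrightarrow> (i, k) \<in> R \<longrightarrow>
        (\<forall>f\<in>Mor i j. \<forall>g\<in>Mor j k. compose (X i) g f \<in> Mor i k))"

definition regular_spine ::
  "'i set \<Rightarrow> ('i \<Rightarrow> 'i \<Rightarrow> bool) \<Rightarrow> ('i \<Rightarrow> 'x set) \<Rightarrow> ('i \<times> 'i) set
     \<Rightarrow> ('i \<Rightarrow> 'i \<Rightarrow> ('x \<Rightarrow> 'x) set) \<Rightarrow> bool" where
  "regular_spine I lt X R Mor \<longleftrightarrow>
     groupoid_spine I lt X R Mor \<and>
     (\<forall>(i, j)\<in>R. \<forall>x\<in>X i. \<forall>y\<in>X j. \<exists>!f. f \<in> Mor i j \<and> f x = y)"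

definition extends_to ::
  "'i set \<Rightarrow> ('i \<Rightarrow> 'i \<Rightarrow> bool) \<Rightarrow> ('i \<Rightarrow> 'x set) \<Rightarrow> ('i \<times> 'i) set
     \<Rightarrow> ('i \<Rightarrow> 'i \<Rightarrow> ('x \<Rightarrow> 'x) set) \<Rightarrow> ('i \<times> 'i) set \<Rightarrow> bool" where
  "extends_to I lt X R Mor S \<longleftrightarrow>
     (\<exists>Mor'. (\<forall>(i, j)\<in>R. Mor' i j = Mor i j) \<and> groupoid_spine I lt X S Mor')"

definition extends_to_groupoid ::
  "'i set \<Rightarrow> ('i \<Rightarrow> 'i \<Rightarrow> bool) \<Rightarrow> ('i \<Rightarrow> 'x set) \<Rightarrow> ('i \<times> 'i) set
     \<Rightarrow> ('i \<Rightarrow> 'i \<Rightarrow> ('x \<Rightarrow> 'x) set) \<Rightarrow> bool" where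
  "extends_to_groupoid I lt X R Mor \<longleftrightarrow> extends_to I lt X R Mor (I \<times> I)"

end

theory Submission
  imports Defs
begin

text \<open>For \<open>(i, j) \<in> R\<close> declare the morphisms \<open>j \<rightarrow> i\<close> to be the inverses of those \<open>i \<rightarrow> j\<close>.
  Regularity makes every hom-set simply transitive, and for simply transitive, inverse-closed
  hom-sets, closure of a triangle under composition does not depend on the order of its vertices.
  Sorting along \<open><\<close> turns every triangle of \<open>R \<union> R\<inverse>\<close> into a triangle of \<open>R\<close>, which gives
  the extension to \<open>R \<union> R\<inverse>\<close>.
  If \<open>I\<close> has at least three elements, every off-diagonal pair lies in \<open>R \<union> R\<inverse>\<close>; a bijection
  \<open>X i \<rightarrow> X i\<close> is declared a morphism iff precomposition with it preserves all hom-sets out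
  of \<open>i\<close>. A third index shows that these loops form a simply transitive group, which contains,
  hence equals, \<open>Mor i i\<close> when \<open>(i, i) \<in> R\<close>; the permutation argument again gives closure
  under composition.\<close>

section \<open>Extensional bijections and simply transitive sets\<close>

definition ext_bij :: "'a set \<Rightarrow> 'b set \<Rightarrow> ('a \<Rightarrow> 'b) set" where
  "ext_bij A B = {f \<in> extensional A. bij_betw f A B}"

definition ext_inv :: "'a set \<Rightarrow> 'b set \<Rightarrow> ('a \<Rightarrow> 'b) \<Rightarrow> 'b \<Rightarrow> 'a" where
  "ext_inv A B f = restrict (inv_into A f) B"

lemma ext_bij_funcset: "f \<in> ext_bij A B \<Longrightarrow> f \<in> A \<rightarrow> B"
  by (simp add: ext_bij_def bij_betw_imp_funcset)

lemma ext_bij_extensional: "f \<in> ext_bij A B \<Longrightarrow> f \<in> extensional A"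
  by (simp add: ext_bij_def)

lemma ext_bij_apply: "f \<in> ext_bij A B \<Longrightarrow> x \<in> A \<Longrightarrow> f x \<in> B"
  using ext_bij_funcset by blast

lemma ext_bij_eqI:
  "f \<in> ext_bij A B \<Longrightarrow> g \<in> ext_bij A C \<Longrightarrow> (\<And>x. x \<in> A \<Longrightarrow> f x = g x) \<Longrightarrow> f = g"
  by (auto simp: ext_bij_def intro: extensionalityI)

lemma compose_ext_bij: "f \<in> ext_bij A B \<Longrightarrow> g \<in> ext_bij B C \<Longrightarrow> compose A g f \<in> ext_bij A C"
  by (auto simp: ext_bij_def intro: bij_betw_compose)

lemma ext_inv_ext_bij: "f \<in> ext_bij A B \<Longrightarrow> ext_inv A B f \<in> ext_bij B A"
  by (simp add: ext_bij_def ext_inv_def bij_betw_inv_into)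

lemma ext_inv_apply_left: "f \<in> ext_bij A B \<Longrightarrow> x \<in> A \<Longrightarrow> ext_inv A B f (f x) = x"
  by (auto simp: ext_bij_def ext_inv_def bij_betw_inv_into_left bij_betw_apply)

lemma ext_inv_apply_right: "f \<in> ext_bij A B \<Longrightarrow> y \<in> B \<Longrightarrow> f (ext_inv A B f y) = y"
  by (auto simp: ext_bij_def ext_inv_def bij_betw_inv_into_right)

lemma ext_inv_ext_inv:
  assumes f: "f \<in> ext_bij A B"
  shows "ext_inv B A (ext_inv A B f) = f"
proof (rule ext_bij_eqI[OF _ f])
  show "ext_inv B A (ext_inv A B f) \<in> ext_bij A B"
    by (intro ext_inv_ext_bij f)
  fix x assume "x \<in> A"
  then show "ext_inv B A (ext_inv A B f) x = f x"
    using ext_inv_apply_left[OF ext_inv_ext_bij[OF f] ext_bij_apply[OF f]]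
    by (simp add: ext_inv_apply_left[OF f])
qed

lemma compose_ext_inv_left: "f \<in> ext_bij A B \<Longrightarrow> compose A (ext_inv A B f) f = (\<lambda>x\<in>A. x)"
  by (simp add: ext_bij_def ext_inv_def compose_inv_into_id)

lemma compose_ext_inv_cancel:
  assumes "d \<in> ext_bij B C" "g \<in> A \<rightarrow> B" "g \<in> extensional A"
  shows "compose A (ext_inv B C d) (compose A d g) = g"
  by (metis assms Id_compose compose_assoc compose_ext_inv_left)

lemma ext_inv_compose:
  assumes f: "f \<in> ext_bij A B" and g: "g \<in> ext_bij B C"
  shows "ext_inv A C (compose A g f) = compose C (ext_inv A B f) (ext_inv B C g)"
proof (rule ext_bij_eqI)
  show "ext_inv A C (compose A g f) \<in> ext_bij C A"
    by (intro ext_inv_ext_bij compose_ext_bij[OF f g])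
  show "compose C (ext_inv A B f) (ext_inv B C g) \<in> ext_bij C A"
    by (intro compose_ext_bij[OF ext_inv_ext_bij ext_inv_ext_bij] f g)
next
  fix z assume "z \<in> C"
  define x where "x = ext_inv A B f (ext_inv B C g z)"
  have y: "ext_inv B C g z \<in> B"
    by (rule ext_bij_apply[OF ext_inv_ext_bij[OF g] \<open>z \<in> C\<close>])
  then have x: "x \<in> A"
    unfolding x_def by (rule ext_bij_apply[OF ext_inv_ext_bij[OF f]])
  have z: "z = compose A g f x"
    using \<open>z \<in> C\<close> f g x y unfolding x_def by (simp add: compose_eq ext_inv_apply_right)
  show "ext_inv A C (compose A g f) z = compose C (ext_inv A B f) (ext_inv B C g) z"
    using ext_inv_apply_left[OF compose_ext_bij[OF f g] x] x f g
    by (simp add: z compose_eq ext_bij_apply ext_inv_apply_left)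
qed

definition simply_transitive :: "'a set \<Rightarrow> 'b set \<Rightarrow> ('a \<Rightarrow> 'b) set \<Rightarrow> bool" where
  "simply_transitive A B F \<longleftrightarrow> F \<subseteq> ext_bij A B \<and> (\<forall>x\<in>A. \<forall>y\<in>B. \<exists>!f\<in>F. f x = y)"

lemma simply_transitiveI:
  assumes "F \<subseteq> ext_bij A B"
    and "\<And>x y. x \<in> A \<Longrightarrow> y \<in> B \<Longrightarrow> \<exists>f\<in>F. f x = y"
    and "\<And>f g x. f \<in> F \<Longrightarrow> g \<in> F \<Longrightarrow> x \<in> A \<Longrightarrow> f x = g x \<Longrightarrow> f = g"
  shows "simply_transitive A B F"
  unfolding simply_transitive_def using assms by blast

lemma simply_transitive_ext_bij: "simply_transitive A B F \<Longrightarrow> f \<in> F \<Longrightarrow> f \<in> ext_bij A B"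
  by (auto simp: simply_transitive_def)

lemma simply_transitive_ex:
  "simply_transitive A B F \<Longrightarrow> x \<in> A \<Longrightarrow> y \<in> B \<Longrightarrow> \<exists>f\<in>F. f x = y"
  unfolding simply_transitive_def by blast

lemma simply_transitive_unique:
  "simply_transitive A B F \<Longrightarrow> f \<in> F \<Longrightarrow> g \<in> F \<Longrightarrow> x \<in> A \<Longrightarrow> f x = g x \<Longrightarrow> f = g"
  unfolding simply_transitive_def by (metis ext_bij_apply subsetD)

lemma simply_transitive_subset_eq:
  assumes "A \<noteq> {}" "simply_transitive A B F" "simply_transitive A B G" "F \<subseteq> G"
  shows "F = G"
proof
  show "G \<subseteq> F"
  proof
    fix g assume g: "g \<in> G"
    obtain x where x: "x \<in> A" using assms(1) by blast
    then obtain f where "f \<in> F" "f x = g x"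
      using simply_transitive_ex[OF assms(2)] g ext_bij_apply simply_transitive_ext_bij assms(3) by metis
    then show "g \<in> F"
      using simply_transitive_unique[OF assms(3)] assms(4) g x by blast
  qed
qed (fact assms(4))

lemma simply_transitive_ext_inv_image:
  assumes F: "simply_transitive A B F"
  shows "simply_transitive B A (ext_inv A B ` F)"
proof (rule simply_transitiveI)
  show "ext_inv A B ` F \<subseteq> ext_bij B A"
    using ext_inv_ext_bij simply_transitive_ext_bij[OF F] by blast
next
  fix y x assume "y \<in> B" "x \<in> A"
  then obtain f where "f \<in> F" "f x = y" using simply_transitive_ex[OF F] by metis
  then show "\<exists>h\<in>ext_inv A B ` F. h y = x"
    using \<open>x \<in> A\<close> ext_inv_apply_left simply_transitive_ext_bij[OF F] by fastforce
next
  fix h h' y assume "h \<in> ext_inv A B ` F" "h' \<in> ext_inv A B ` F" "y \<in> B" "h y = h' y"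
  then obtain f f' where f: "f \<in> F" "h = ext_inv A B f" and f': "f' \<in> F" "h' = ext_inv A B f'"
    by blast
  have "f (h y) = y" "f' (h y) = y"
    using f f' \<open>y \<in> B\<close> \<open>h y = h' y\<close> ext_inv_apply_right simply_transitive_ext_bij[OF F] by metis+
  then have "f = f'"
    using simply_transitive_unique[OF F f(1) f'(1)] ext_bij_apply ext_inv_ext_bij
      simply_transitive_ext_bij[OF F f(1)] f(2) \<open>y \<in> B\<close> by metis
  then show "h = h'" using f f' by simp
qed

section \<open>Permuting the vertices of a triangle\<close>

definition regular_homs :: "('i \<Rightarrow> 'x set) \<Rightarrow> ('i \<Rightarrow> 'i \<Rightarrow> ('x \<Rightarrow> 'x) set) \<Rightarrow> 'i \<Rightarrow> 'i \<Rightarrow> bool" where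
  "regular_homs X M i j \<longleftrightarrow>
     simply_transitive (X i) (X j) (M i j) \<and> (\<forall>f\<in>M i j. ext_inv (X i) (X j) f \<in> M j i)"

definition comp_closed :: "('i \<Rightarrow> 'x set) \<Rightarrow> ('i \<Rightarrow> 'i \<Rightarrow> ('x \<Rightarrow> 'x) set) \<Rightarrow> 'i \<Rightarrow> 'i \<Rightarrow> 'i \<Rightarrow> bool" where
  "comp_closed X M i j k \<longleftrightarrow> (\<forall>f\<in>M i j. \<forall>g\<in>M j k. compose (X i) g f \<in> M i k)"

definition regular_triangle ::
  "('i \<Rightarrow> 'x set) \<Rightarrow> ('i \<Rightarrow> 'i \<Rightarrow> ('x \<Rightarrow> 'x) set) \<Rightarrow> 'i \<Rightarrow> 'i \<Rightarrow> 'i \<Rightarrow> bool" where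
  "regular_triangle X M i j k \<longleftrightarrow> X i \<noteq> {} \<and> X j \<noteq> {} \<and> X k \<noteq> {} \<and>
     regular_homs X M i j \<and> regular_homs X M j i \<and> regular_homs X M j k \<and>
     regular_homs X M k j \<and> regular_homs X M i k \<and> regular_homs X M k i"

definition triple_perms :: "'i \<Rightarrow> 'i \<Rightarrow> 'i \<Rightarrow> ('i \<times> 'i \<times> 'i) set" where
  "triple_perms i j k = {(i, j, k), (j, k, i), (k, i, j), (k, j, i), (j, i, k), (i, k, j)}"

lemma regular_homs_ext_bij: "regular_homs X M i j \<Longrightarrow> f \<in> M i j \<Longrightarrow> f \<in> ext_bij (X i) (X j)"
  by (meson regular_homs_def simply_transitive_ext_bij)

lemma regular_homs_ext_inv: "regular_homs X M i j \<Longrightarrow> f \<in> M i j \<Longrightarrow> ext_inv (X i) (X j) f \<in> M j i"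
  by (simp add: regular_homs_def)

lemma regular_homs_ex:
  "regular_homs X M i j \<Longrightarrow> x \<in> X i \<Longrightarrow> y \<in> X j \<Longrightarrow> \<exists>f\<in>M i j. f x = y"
  by (meson regular_homs_def simply_transitive_ex)

lemma regular_homs_nonempty:
  assumes "regular_homs X M i j" "X i \<noteq> {}" "X j \<noteq> {}" shows "M i j \<noteq> {}"
proof -
  obtain x y where "x \<in> X i" "y \<in> X j" using assms(2,3) by blast
  then show ?thesis using regular_homs_ex[OF assms(1)] by blast
qed

lemma regular_homs_unique:
  "regular_homs X M i j \<Longrightarrow> f \<in> M i j \<Longrightarrow> g \<in> M i j \<Longrightarrow> x \<in> X i \<Longrightarrow> f x = g x \<Longrightarrow> f = g"
  by (meson regular_homs_def simply_transitive_unique)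

lemma regular_triangle_rotate: "regular_triangle X M i j k \<Longrightarrow> regular_triangle X M k i j"
  by (simp add: regular_triangle_def)

lemma regular_triangle_reverse: "regular_triangle X M i j k \<Longrightarrow> regular_triangle X M k j i"
  by (auto simp: regular_triangle_def)

lemma comp_closed_reverse:
  assumes T: "regular_triangle X M i j k" and C: "comp_closed X M i j k"
  shows "comp_closed X M k j i"
  unfolding comp_closed_def
proof (intro ballI)
  fix u v assume u: "u \<in> M k j" and v: "v \<in> M j i"
  have kj: "regular_homs X M k j" and ji: "regular_homs X M j i" and ik: "regular_homs X M i k"
    using T by (simp_all add: regular_triangle_def)
  have "compose (X i) (ext_inv (X k) (X j) u) (ext_inv (X j) (X i) v) \<in> M i k"
    using C regular_homs_ext_inv[OF kj u] regular_homs_ext_inv[OF ji v]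
    unfolding comp_closed_def by blast
  then have "ext_inv (X i) (X k) (compose (X i) (ext_inv (X k) (X j) u) (ext_inv (X j) (X i) v)) \<in> M k i"
    by (rule regular_homs_ext_inv[OF ik])
  moreover have "ext_inv (X i) (X k) (compose (X i) (ext_inv (X k) (X j) u) (ext_inv (X j) (X i) v))
      = compose (X k) v u"
  proof -
    have u_bij: "u \<in> ext_bij (X k) (X j)" and v_bij: "v \<in> ext_bij (X j) (X i)"
      using regular_homs_ext_bij[OF kj u] regular_homs_ext_bij[OF ji v] .
    show ?thesis
      using ext_inv_compose[OF ext_inv_ext_bij[OF v_bij] ext_inv_ext_bij[OF u_bij]]
      by (simp add: ext_inv_ext_inv u_bij v_bij)
  qed
  ultimately show "compose (X k) v u \<in> M k i" by simp
qed

lemma comp_closed_rotate: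
  assumes T: "regular_triangle X M i j k" and C: "comp_closed X M i j k"
  shows "comp_closed X M k i j"
  unfolding comp_closed_def
proof (intro ballI)
  fix a f assume a: "a \<in> M k i" and f: "f \<in> M i j"
  have kj: "regular_homs X M k j" and ki: "regular_homs X M k i" and ik: "regular_homs X M i k"
    and ij: "regular_homs X M i j" and "X k \<noteq> {}"
    using T by (simp_all add: regular_triangle_def)
  then obtain x where x: "x \<in> X k" by blast
  have a_bij: "a \<in> ext_bij (X k) (X i)" and f_bij: "f \<in> ext_bij (X i) (X j)"
    using regular_homs_ext_bij[OF ki a] regular_homs_ext_bij[OF ij f] .
  have ax: "a x \<in> X i" using ext_bij_apply[OF a_bij x] .
  obtain c where c: "c \<in> M k j" "c x = f (a x)"
    using regular_homs_ex[OF kj x ext_bij_apply[OF f_bij ax]] by blast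
  have c_bij: "c \<in> ext_bij (X k) (X j)" using regular_homs_ext_bij[OF kj c(1)] .
  \<comment> \<open>\<open>c\<^sup>-\<^sup>1 \<circ> f\<close> and \<open>a\<^sup>-\<^sup>1\<close> lie in \<open>M i k\<close> and agree at \<open>a x\<close>, hence coincide.\<close>
  have "compose (X i) (ext_inv (X k) (X j) c) f \<in> M i k"
    using C f regular_homs_ext_inv[OF kj c(1)] unfolding comp_closed_def by blast
  moreover have "compose (X i) (ext_inv (X k) (X j) c) f (a x) = ext_inv (X k) (X i) a (a x)"
    using ax x ext_inv_apply_left[OF c_bij x]
    by (simp add: compose_eq ext_inv_apply_left a_bij flip: c(2))
  ultimately have eq: "compose (X i) (ext_inv (X k) (X j) c) f = ext_inv (X k) (X i) a"
    using regular_homs_unique[OF ik _ regular_homs_ext_inv[OF ki a] ax] by blast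
  have "compose (X k) f a = c"
  proof (rule ext_bij_eqI[OF compose_ext_bij[OF a_bij f_bij] c_bij])
    fix z assume z: "z \<in> X k"
    have az: "a z \<in> X i" using ext_bij_apply[OF a_bij z] .
    have "ext_inv (X k) (X j) c (f (a z)) = z"
      using fun_cong[OF eq, of "a z"] az z by (simp add: compose_eq ext_inv_apply_left a_bij)
    then have "c z = f (a z)"
      using ext_inv_apply_right[OF c_bij ext_bij_apply[OF f_bij az]] by metis
    then show "compose (X k) f a z = c z" using z by (simp add: compose_eq)
  qed
  then show "compose (X k) f a \<in> M k j" using c(1) by simp
qed

lemma comp_closed_triple_perms:
  assumes T: "regular_triangle X M i j k" and C: "comp_closed X M i j k"
    and P: "(a, b, c) \<in> triple_perms i j k"
  shows "comp_closed X M a b c"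
proof -
  have T': "regular_triangle X M k j i" using regular_triangle_reverse[OF T] .
  have kij: "comp_closed X M k i j" using comp_closed_rotate[OF T C] .
  have jki: "comp_closed X M j k i" using comp_closed_rotate[OF regular_triangle_rotate[OF T] kij] .
  have kji: "comp_closed X M k j i" using comp_closed_reverse[OF T C] .
  have ikj: "comp_closed X M i k j" using comp_closed_rotate[OF T' kji] .
  have jik: "comp_closed X M j i k" using comp_closed_rotate[OF regular_triangle_rotate[OF T'] ikj] .
  from P show ?thesis
    unfolding triple_perms_def by (elim insertE emptyE) (simp_all add: C kij jki kji ikj jik)
qed

lemma regular_triangle_triple_perms:
  assumes "regular_triangle X M i j k" "(a, b, c) \<in> triple_perms i j k"
  shows "regular_triangle X M a b c"
  using assms(2) unfolding triple_perms_def
  by (elim insertE emptyE) (use assms(1) in \<open>simp_all add: regular_triangle_def\<close>)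

lemma comp_closed_from_perm:
  assumes T: "regular_triangle X M i j k" and P: "(a, b, c) \<in> triple_perms i j k"
    and C: "comp_closed X M a b c"
  shows "comp_closed X M i j k"
proof (rule comp_closed_triple_perms[OF regular_triangle_triple_perms[OF T P] C])
  show "(i, j, k) \<in> triple_perms a b c"
    using P unfolding triple_perms_def by (elim insertE emptyE) simp_all
qed

section \<open>The symmetric extension\<close>

lemma strict_linear_on_sort3:
  assumes lin: "strict_linear_on I lt" and "i \<in> I" "j \<in> I" "k \<in> I"
  shows "\<exists>(a, b, c)\<in>triple_perms i j k. (a = b \<or> lt a b) \<and> (b = c \<or> lt b c)"
proof -
  have tot: "\<And>a b. a \<in> I \<Longrightarrow> b \<in> I \<Longrightarrow> a = b \<or> lt a b \<or> lt b a"
    using lin unfolding strict_linear_on_def by blast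
  show ?thesis
    using tot[of i j] tot[of j k] tot[of i k] assms(2-4) unfolding triple_perms_def by auto
qed

lemma groupoid_spineI:
  assumes lin: "strict_linear_on I lt" and X: "\<And>i. i \<in> I \<Longrightarrow> X i \<noteq> {}"
    and S: "S \<noteq> {}" "S \<subseteq> I \<times> I" "\<And>i j. i \<in> I \<Longrightarrow> j \<in> I \<Longrightarrow> lt i j \<Longrightarrow> (i, j) \<in> S"
    and reg: "\<And>i j. (i, j) \<in> S \<Longrightarrow> regular_homs X M i j"
    and comp: "\<And>i j k. (i, j) \<in> S \<Longrightarrow> (j, k) \<in> S \<Longrightarrow> (i, k) \<in> S \<Longrightarrow> comp_closed X M i j k"
  shows "groupoid_spine I lt X S M"
proof -
  have nonempty: "M i j \<noteq> {}" if ij: "(i, j) \<in> S" for i j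
    using regular_homs_nonempty[OF reg[OF ij]] X S(2) ij by blast
  have bij: "f \<in> extensional (X i) \<and> bij_betw f (X i) (X j)" if "(i, j) \<in> S" "f \<in> M i j" for i j f
    using regular_homs_ext_bij[OF reg[OF that(1)] that(2)] by (simp add: ext_bij_def)
  have id: "(\<lambda>x\<in>X i. x) \<in> M i i" if ii: "(i, i) \<in> S" for i
  proof -
    obtain f where f: "f \<in> M i i" using nonempty[OF ii] by blast
    have "compose (X i) (ext_inv (X i) (X i) f) f \<in> M i i"
      using comp[OF ii ii ii] f regular_homs_ext_inv[OF reg[OF ii] f]
      unfolding comp_closed_def by blast
    then show ?thesis
      by (simp add: compose_ext_inv_left[OF regular_homs_ext_bij[OF reg[OF ii] f]])
  qed
  show ?thesis
    unfolding groupoid_spine_def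
    using lin X S nonempty bij id regular_homs_ext_inv[OF reg] comp
    by (auto simp: ext_inv_def comp_closed_def)
qed

locale regular_groupoid_spine =
  fixes I :: "'i set" and lt :: "'i \<Rightarrow> 'i \<Rightarrow> bool" and X :: "'i \<Rightarrow> 'x set"
    and R :: "('i \<times> 'i) set" and Mor :: "'i \<Rightarrow> 'i \<Rightarrow> ('x \<Rightarrow> 'x) set"
  assumes regular: "regular_spine I lt X R Mor"
begin

lemma spine: "groupoid_spine I lt X R Mor"
  using regular by (simp add: regular_spine_def)

lemma lt_strict_linear: "strict_linear_on I lt"
  using spine by (simp add: groupoid_spine_def)

lemma X_nonempty: "i \<in> I \<Longrightarrow> X i \<noteq> {}"
  using spine by (simp add: groupoid_spine_def)

lemma R_nonempty: "R \<noteq> {}"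
  using spine by (simp add: groupoid_spine_def)

lemma R_subset: "R \<subseteq> I \<times> I"
  using spine by (simp add: groupoid_spine_def)

lemma lt_in_R: "i \<in> I \<Longrightarrow> j \<in> I \<Longrightarrow> lt i j \<Longrightarrow> (i, j) \<in> R"
  using spine by (simp add: groupoid_spine_def)

lemma Mor_simply_transitive:
  assumes ij: "(i, j) \<in> R" shows "simply_transitive (X i) (X j) (Mor i j)"
proof -
  have "\<forall>f\<in>Mor i j. f \<in> extensional (X i) \<and> bij_betw f (X i) (X j)"
    using spine ij unfolding groupoid_spine_def by fast
  then have "Mor i j \<subseteq> ext_bij (X i) (X j)"
    unfolding ext_bij_def by blast
  moreover have "\<forall>x\<in>X i. \<forall>y\<in>X j. \<exists>!f. f \<in> Mor i j \<and> f x = y"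
    using regular ij unfolding regular_spine_def by fast
  ultimately show ?thesis unfolding simply_transitive_def by (intro conjI)
qed

lemma Mor_ext_inv: "(i, j) \<in> R \<Longrightarrow> (j, i) \<in> R \<Longrightarrow> f \<in> Mor i j \<Longrightarrow> ext_inv (X i) (X j) f \<in> Mor j i"
  using spine by (simp add: groupoid_spine_def ext_inv_def)

lemma Mor_comp_closed: "(i, j) \<in> R \<Longrightarrow> (j, k) \<in> R \<Longrightarrow> (i, k) \<in> R \<Longrightarrow> comp_closed X Mor i j k"
  using spine by (simp add: groupoid_spine_def comp_closed_def)

lemma lt_total: "i \<in> I \<Longrightarrow> j \<in> I \<Longrightarrow> i \<noteq> j \<Longrightarrow> lt i j \<or> lt j i"
  using lt_strict_linear unfolding strict_linear_on_def by blast

lemma lt_trans: "i \<in> I \<Longrightarrow> j \<in> I \<Longrightarrow> k \<in> I \<Longrightarrow> lt i j \<Longrightarrow> lt j k \<Longrightarrow> lt i k"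
  using lt_strict_linear unfolding strict_linear_on_def by blast

lemma off_diag_in_sym_closure: "i \<in> I \<Longrightarrow> j \<in> I \<Longrightarrow> i \<noteq> j \<Longrightarrow> (i, j) \<in> R \<union> R\<inverse>"
  using lt_total lt_in_R by blast

definition Mor_sym :: "'i \<Rightarrow> 'i \<Rightarrow> ('x \<Rightarrow> 'x) set" where
  "Mor_sym i j = (if (i, j) \<in> R then Mor i j else ext_inv (X j) (X i) ` Mor j i)"

lemma Mor_sym_R: "(i, j) \<in> R \<Longrightarrow> Mor_sym i j = Mor i j"
  by (simp add: Mor_sym_def)

lemma Mor_sym_converse:
  assumes ji: "(j, i) \<in> R" shows "Mor_sym i j = ext_inv (X j) (X i) ` Mor j i"
proof (cases "(i, j) \<in> R")
  case True
  have "ext_inv (X j) (X i) ` Mor j i = Mor i j"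
  proof (rule simply_transitive_subset_eq)
    show "X i \<noteq> {}" using X_nonempty R_subset ji by blast
    show "simply_transitive (X i) (X j) (ext_inv (X j) (X i) ` Mor j i)"
      by (rule simply_transitive_ext_inv_image[OF Mor_simply_transitive[OF ji]])
    show "simply_transitive (X i) (X j) (Mor i j)" by (rule Mor_simply_transitive[OF True])
    show "ext_inv (X j) (X i) ` Mor j i \<subseteq> Mor i j" using Mor_ext_inv[OF ji True] by blast
  qed
  then show ?thesis using True by (simp add: Mor_sym_def)
qed (simp add: Mor_sym_def)

lemma regular_homs_Mor_sym_R:
  assumes ij: "(i, j) \<in> R"
  shows "regular_homs X Mor_sym i j" and "regular_homs X Mor_sym j i"
proof -
  have bij: "f \<in> ext_bij (X i) (X j)" if "f \<in> Mor i j" for f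
    using simply_transitive_ext_bij[OF Mor_simply_transitive[OF ij] that] .
  show "regular_homs X Mor_sym i j"
    unfolding regular_homs_def Mor_sym_R[OF ij] Mor_sym_converse[OF ij]
    using Mor_simply_transitive[OF ij] by blast
  show "regular_homs X Mor_sym j i"
    unfolding regular_homs_def Mor_sym_R[OF ij] Mor_sym_converse[OF ij]
    using simply_transitive_ext_inv_image[OF Mor_simply_transitive[OF ij]]
    by (auto simp: ext_inv_ext_inv bij)
qed

lemma regular_homs_Mor_sym: "(i, j) \<in> R \<union> R\<inverse> \<Longrightarrow> regular_homs X Mor_sym i j"
  using regular_homs_Mor_sym_R by blast

lemma comp_closed_Mor_sym:
  assumes S: "(i, j) \<in> R \<union> R\<inverse>" "(j, k) \<in> R \<union> R\<inverse>" "(i, k) \<in> R \<union> R\<inverse>"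
  shows "comp_closed X Mor_sym i j k"
proof -
  have I: "i \<in> I" "j \<in> I" "k \<in> I" using S R_subset by auto
  have T: "regular_triangle X Mor_sym i j k"
    unfolding regular_triangle_def by (intro conjI regular_homs_Mor_sym X_nonempty I) (use S in auto)
  obtain a b c where P: "(a, b, c) \<in> triple_perms i j k"
    and ab: "a = b \<or> lt a b" and bc: "b = c \<or> lt b c"
    using strict_linear_on_sort3[OF lt_strict_linear I] by blast
  have abc: "a \<in> I" "b \<in> I" "c \<in> I" using P I unfolding triple_perms_def by auto
  have ac: "a = c \<or> lt a c" using ab bc lt_trans[OF abc] by blast
  have sym_ab: "(a, b) \<in> R \<union> R\<inverse>" and sym_bc: "(b, c) \<in> R \<union> R\<inverse>"
    and sym_ac: "(a, c) \<in> R \<union> R\<inverse>"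
    using P S unfolding triple_perms_def by auto
  have in_R: "(p, q) \<in> R" if "p \<in> I" "q \<in> I" "(p, q) \<in> R \<union> R\<inverse>" "p = q \<or> lt p q" for p q
    using that lt_in_R by auto
  have "(a, b) \<in> R" "(b, c) \<in> R" "(a, c) \<in> R"
    using in_R[OF abc(1,2) sym_ab ab] in_R[OF abc(2,3) sym_bc bc] in_R[OF abc(1,3) sym_ac ac] .
  then have "comp_closed X Mor_sym a b c" using Mor_comp_closed by (simp add: Mor_sym_R comp_closed_def)
  then show ?thesis by (rule comp_closed_from_perm[OF T P])
qed

lemma regular_homs_Mor_sym_off_diag: "i \<in> I \<Longrightarrow> j \<in> I \<Longrightarrow> i \<noteq> j \<Longrightarrow> regular_homs X Mor_sym i j"
  by (rule regular_homs_Mor_sym[OF off_diag_in_sym_closure])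

lemma comp_closed_Mor_sym_distinct:
  "i \<in> I \<Longrightarrow> j \<in> I \<Longrightarrow> k \<in> I \<Longrightarrow> i \<noteq> j \<Longrightarrow> j \<noteq> k \<Longrightarrow> i \<noteq> k \<Longrightarrow> comp_closed X Mor_sym i j k"
  by (intro comp_closed_Mor_sym off_diag_in_sym_closure)

lemma Mor_sym_off_diag_nonempty: "i \<in> I \<Longrightarrow> j \<in> I \<Longrightarrow> i \<noteq> j \<Longrightarrow> Mor_sym i j \<noteq> {}"
  by (rule regular_homs_nonempty[OF regular_homs_Mor_sym_off_diag X_nonempty X_nonempty])

lemma groupoid_spine_sym_closure: "groupoid_spine I lt X (R \<union> R\<inverse>) Mor_sym"
  by (rule groupoid_spineI[OF lt_strict_linear X_nonempty _ _ _ regular_homs_Mor_sym comp_closed_Mor_sym])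
    (use R_nonempty R_subset lt_in_R in auto)

lemma extends_to_sym_closure: "\<exists>S. sym S \<and> R \<subseteq> S \<and> S \<subseteq> I \<times> I \<and> extends_to I lt X R Mor S"
proof (intro exI conjI)
  show "sym (R \<union> R\<inverse>)" by (rule sym_Un_converse)
  show "R \<subseteq> R \<union> R\<inverse>" by (rule Un_upper1)
  show "R \<union> R\<inverse> \<subseteq> I \<times> I" using R_subset by auto
  show "extends_to I lt X R Mor (R \<union> R\<inverse>)"
    unfolding extends_to_def
    by (intro exI[of _ Mor_sym] conjI groupoid_spine_sym_closure) (auto simp: Mor_sym_R)
qed

end

section \<open>Extension to a groupoid\<close>

locale regular_groupoid_spine_ge3 = regular_groupoid_spine +
  assumes third_index: "\<And>i j. i \<in> I \<Longrightarrow> j \<in> I \<Longrightarrow> \<exists>l\<in>I. l \<noteq> i \<and> l \<noteq> j"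
begin

definition Mor_diag where
  "Mor_diag i = {f \<in> ext_bij (X i) (X i).
     \<forall>j\<in>I - {i}. \<forall>a\<in>Mor_sym i j. compose (X i) a f \<in> Mor_sym i j}"

definition Mor_full where
  "Mor_full i j = (if i = j then Mor_diag i else Mor_sym i j)"

lemma Mor_diagI:
  "f \<in> ext_bij (X i) (X i) \<Longrightarrow>
   (\<And>j a. j \<in> I \<Longrightarrow> j \<noteq> i \<Longrightarrow> a \<in> Mor_sym i j \<Longrightarrow> compose (X i) a f \<in> Mor_sym i j) \<Longrightarrow>
   f \<in> Mor_diag i"
  by (simp add: Mor_diag_def)

lemma Mor_diag_ext_bij: "f \<in> Mor_diag i \<Longrightarrow> f \<in> ext_bij (X i) (X i)"
  by (simp add: Mor_diag_def)

lemma Mor_diag_compose_mem: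
  "f \<in> Mor_diag i \<Longrightarrow> j \<in> I \<Longrightarrow> j \<noteq> i \<Longrightarrow> a \<in> Mor_sym i j \<Longrightarrow> compose (X i) a f \<in> Mor_sym i j"
  by (simp add: Mor_diag_def)

lemma Mor_diag_unique:
  assumes i: "i \<in> I" and f: "f \<in> Mor_diag i" and g: "g \<in> Mor_diag i"
    and x: "x \<in> X i" and fg: "f x = g x"
  shows "f = g"
proof -
  obtain j where j: "j \<in> I" "j \<noteq> i" using third_index[OF i i] by blast
  have reg: "regular_homs X Mor_sym i j" using regular_homs_Mor_sym_off_diag i j by simp
  obtain a where a: "a \<in> Mor_sym i j" using Mor_sym_off_diag_nonempty i j by fastforce
  have a_bij: "a \<in> ext_bij (X i) (X j)" using regular_homs_ext_bij[OF reg a] .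
  have cancel: "compose (X i) (ext_inv (X i) (X j) a) (compose (X i) a h) = h" if "h \<in> Mor_diag i" for h
  proof -
    have h: "h \<in> ext_bij (X i) (X i)" using Mor_diag_ext_bij[OF that] .
    show ?thesis by (rule compose_ext_inv_cancel[OF a_bij ext_bij_funcset[OF h] ext_bij_extensional[OF h]])
  qed
  have "compose (X i) a f x = compose (X i) a g x" using x fg by (simp add: compose_eq)
  then have "compose (X i) a f = compose (X i) a g"
    by (rule regular_homs_unique[OF reg Mor_diag_compose_mem[OF f j a] Mor_diag_compose_mem[OF g j a] x])
  then show "f = g" using cancel[OF f] cancel[OF g] by metis
qed

text \<open>Here the third index is needed: \<open>e \<circ> b\<^sup>-\<^sup>1\<close> has no hom-set \<open>j \<rightarrow> j\<close> to live in, so we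
  detour through some \<open>l \<notin> {i, j}\<close>.\<close>

lemma compose_ext_inv_compose_Mor_sym:
  assumes i: "i \<in> I" and j: "j \<in> I" "j \<noteq> i"
    and a: "a \<in> Mor_sym i j" and b: "b \<in> Mor_sym i j" and e: "e \<in> Mor_sym i j"
  shows "compose (X i) e (compose (X i) (ext_inv (X i) (X j) b) a) \<in> Mor_sym i j"
proof -
  let ?b' = "ext_inv (X i) (X j) b"
  have reg: "regular_homs X Mor_sym i j" using regular_homs_Mor_sym_off_diag i j by simp
  have a_bij: "a \<in> ext_bij (X i) (X j)" and b_bij: "b \<in> ext_bij (X i) (X j)"
    and e_bij: "e \<in> ext_bij (X i) (X j)"
    using regular_homs_ext_bij[OF reg a] regular_homs_ext_bij[OF reg b] regular_homs_ext_bij[OF reg e] .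
  have b': "?b' \<in> Mor_sym j i" using regular_homs_ext_inv[OF reg b] .
  have b'_bij: "?b' \<in> ext_bij (X j) (X i)" using ext_inv_ext_bij[OF b_bij] .
  obtain l where l: "l \<in> I" "l \<noteq> i" "l \<noteq> j" using third_index[OF i j(1)] by blast
  obtain d where d: "d \<in> Mor_sym j l" using Mor_sym_off_diag_nonempty j l by fastforce
  have reg_jl: "regular_homs X Mor_sym j l" using regular_homs_Mor_sym_off_diag j l by simp
  have d_bij: "d \<in> ext_bij (X j) (X l)" using regular_homs_ext_bij[OF reg_jl d] .
  have ijl: "comp_closed X Mor_sym i j l" and jil: "comp_closed X Mor_sym j i l"
    and ilj: "comp_closed X Mor_sym i l j"
    using comp_closed_Mor_sym_distinct[OF i j(1) l(1)] comp_closed_Mor_sym_distinct[OF j(1) i l(1)]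
      comp_closed_Mor_sym_distinct[OF i l(1) j(1)] j(2) l(2,3) by auto
  define t where "t = compose (X i) (compose (X j) (compose (X i) d e) ?b') a"
  have "compose (X i) d e \<in> Mor_sym i l" using ijl e d unfolding comp_closed_def by blast
  then have "compose (X j) (compose (X i) d e) ?b' \<in> Mor_sym j l"
    using jil b' unfolding comp_closed_def by blast
  then have "t \<in> Mor_sym i l" using ijl a unfolding comp_closed_def t_def by blast
  then have t': "compose (X i) (ext_inv (X j) (X l) d) t \<in> Mor_sym i j"
    using ilj regular_homs_ext_inv[OF reg_jl d] unfolding comp_closed_def by blast
  moreover have "compose (X i) (ext_inv (X j) (X l) d) t = compose (X i) e (compose (X i) ?b' a)"
  proof (rule ext_bij_eqI[OF regular_homs_ext_bij[OF reg t']])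
    show "compose (X i) e (compose (X i) ?b' a) \<in> ext_bij (X i) (X j)"
      by (intro compose_ext_bij[OF compose_ext_bij[OF a_bij b'_bij] e_bij])
  next
    fix z assume z: "z \<in> X i"
    have az: "a z \<in> X j" using ext_bij_apply[OF a_bij z] .
    have baz: "?b' (a z) \<in> X i" using ext_bij_apply[OF b'_bij az] .
    have ebaz: "e (?b' (a z)) \<in> X j" using ext_bij_apply[OF e_bij baz] .
    show "compose (X i) (ext_inv (X j) (X l) d) t z = compose (X i) e (compose (X i) ?b' a) z"
      using z az baz ebaz ext_inv_apply_left[OF d_bij ebaz] by (simp add: t_def compose_eq)
  qed
  ultimately show ?thesis by simp
qed

lemma ext_inv_compose_in_Mor_diag:
  assumes i: "i \<in> I" and j: "j \<in> I" "j \<noteq> i" and a: "a \<in> Mor_sym i j" and b: "b \<in> Mor_sym i j"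
  shows "compose (X i) (ext_inv (X i) (X j) b) a \<in> Mor_diag i"
proof -
  let ?b' = "ext_inv (X i) (X j) b"
  have reg: "regular_homs X Mor_sym i j" using regular_homs_Mor_sym_off_diag i j by simp
  have a_bij: "a \<in> ext_bij (X i) (X j)" using regular_homs_ext_bij[OF reg a] .
  have b': "?b' \<in> Mor_sym j i" using regular_homs_ext_inv[OF reg b] .
  have b'_bij: "?b' \<in> ext_bij (X j) (X i)" using ext_inv_ext_bij[OF regular_homs_ext_bij[OF reg b]] .
  show ?thesis
  proof (rule Mor_diagI[OF compose_ext_bij[OF a_bij b'_bij]])
    fix k e assume k: "k \<in> I" "k \<noteq> i" and e: "e \<in> Mor_sym i k"
    show "compose (X i) e (compose (X i) ?b' a) \<in> Mor_sym i k"
    proof (cases "k = j")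
      case False
      have "compose (X j) e ?b' \<in> Mor_sym j k"
        using comp_closed_Mor_sym_distinct[OF j(1) i k(1)] j k False b' e
        unfolding comp_closed_def by blast
      then have "compose (X i) (compose (X j) e ?b') a \<in> Mor_sym i k"
        using comp_closed_Mor_sym_distinct[OF i j(1) k(1)] j k False a
        unfolding comp_closed_def by blast
      moreover have "compose (X i) e (compose (X i) ?b' a) = compose (X i) (compose (X j) e ?b') a"
        by (rule compose_assoc[OF ext_bij_funcset[OF a_bij]])
      ultimately show ?thesis by simp
    next
      case True
      then show ?thesis using compose_ext_inv_compose_Mor_sym[OF i j a b] e by simp
    qed
  qed
qed

lemma Mor_diag_ex:
  assumes i: "i \<in> I" and x: "x \<in> X i" and y: "y \<in> X i"
  shows "\<exists>f\<in>Mor_diag i. f x = y"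
proof -
  obtain j where j: "j \<in> I" "j \<noteq> i" using third_index[OF i i] by blast
  have reg: "regular_homs X Mor_sym i j" using regular_homs_Mor_sym_off_diag i j by simp
  obtain b where b: "b \<in> Mor_sym i j" using Mor_sym_off_diag_nonempty i j by fastforce
  have b_bij: "b \<in> ext_bij (X i) (X j)" using regular_homs_ext_bij[OF reg b] .
  obtain c where c: "c \<in> Mor_sym i j" "c x = b y"
    using regular_homs_ex[OF reg x ext_bij_apply[OF b_bij y]] by blast
  have "compose (X i) (ext_inv (X i) (X j) b) c x = y"
    using x y c(2) by (simp add: compose_eq ext_inv_apply_left[OF b_bij])
  then show ?thesis using ext_inv_compose_in_Mor_diag[OF i j c(1) b] by blast
qed

lemma simply_transitive_Mor_diag: "i \<in> I \<Longrightarrow> simply_transitive (X i) (X i) (Mor_diag i)"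
  by (rule simply_transitiveI) (auto intro: Mor_diag_ext_bij Mor_diag_ex Mor_diag_unique)

lemma Mor_diag_compose:
  assumes f: "f \<in> Mor_diag i" and g: "g \<in> Mor_diag i"
  shows "compose (X i) g f \<in> Mor_diag i"
proof (rule Mor_diagI[OF compose_ext_bij[OF Mor_diag_ext_bij[OF f] Mor_diag_ext_bij[OF g]]])
  fix j a assume j: "j \<in> I" "j \<noteq> i" and a: "a \<in> Mor_sym i j"
  have "compose (X i) a (compose (X i) g f) = compose (X i) (compose (X i) a g) f"
    by (rule compose_assoc[OF ext_bij_funcset[OF Mor_diag_ext_bij[OF f]]])
  then show "compose (X i) a (compose (X i) g f) \<in> Mor_sym i j"
    using Mor_diag_compose_mem[OF f j Mor_diag_compose_mem[OF g j a]] by simp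
qed

lemma Mor_diag_ext_inv:
  assumes i: "i \<in> I" and f: "f \<in> Mor_diag i"
  shows "ext_inv (X i) (X i) f \<in> Mor_diag i"
proof -
  have f_bij: "f \<in> ext_bij (X i) (X i)" using Mor_diag_ext_bij[OF f] .
  have f'_bij: "ext_inv (X i) (X i) f \<in> ext_bij (X i) (X i)" using ext_inv_ext_bij[OF f_bij] .
  show ?thesis
  proof (rule Mor_diagI[OF f'_bij])
    fix j a assume j: "j \<in> I" "j \<noteq> i" and a: "a \<in> Mor_sym i j"
    have reg: "regular_homs X Mor_sym i j" using regular_homs_Mor_sym_off_diag i j by simp
    have a_bij: "a \<in> ext_bij (X i) (X j)" using regular_homs_ext_bij[OF reg a] .
    obtain x where x: "x \<in> X i" using X_nonempty[OF i] by blast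
    obtain c where c: "c \<in> Mor_sym i j" "c (f x) = a x"
      using regular_homs_ex[OF reg ext_bij_apply[OF f_bij x] ext_bij_apply[OF a_bij x]] by blast
    have c_bij: "c \<in> ext_bij (X i) (X j)" using regular_homs_ext_bij[OF reg c(1)] .
    have "compose (X i) c f x = a x" using x c(2) by (simp add: compose_eq)
    then have cf: "compose (X i) c f = a"
      by (rule regular_homs_unique[OF reg Mor_diag_compose_mem[OF f j c(1)] a x])
    have "compose (X i) a (ext_inv (X i) (X i) f) = c"
    proof (rule ext_bij_eqI[OF compose_ext_bij[OF f'_bij a_bij] c_bij])
      fix z assume z: "z \<in> X i"
      have f'z: "ext_inv (X i) (X i) f z \<in> X i" using ext_bij_apply[OF f'_bij z] .
      have "a (ext_inv (X i) (X i) f z) = compose (X i) c f (ext_inv (X i) (X i) f z)"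
        by (simp add: cf)
      also have "\<dots> = c z" using f'z z by (simp add: compose_eq ext_inv_apply_right[OF f_bij])
      finally show "compose (X i) a (ext_inv (X i) (X i) f) z = c z" using z by (simp add: compose_eq)
    qed
    then show "compose (X i) a (ext_inv (X i) (X i) f) \<in> Mor_sym i j" using c(1) by simp
  qed
qed

lemma regular_homs_Mor_full: "i \<in> I \<Longrightarrow> j \<in> I \<Longrightarrow> regular_homs X Mor_full i j"
  using regular_homs_Mor_sym_off_diag[of i j] simply_transitive_Mor_diag[of i] Mor_diag_ext_inv[of i]
  by (auto simp: Mor_full_def regular_homs_def)

lemma comp_closed_Mor_full_loop: "i \<in> I \<Longrightarrow> k \<in> I \<Longrightarrow> comp_closed X Mor_full i i k"
  by (auto simp: comp_closed_def Mor_full_def intro: Mor_diag_compose Mor_diag_compose_mem)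

lemma comp_closed_Mor_full:
  assumes I: "i \<in> I" "j \<in> I" "k \<in> I"
  shows "comp_closed X Mor_full i j k"
proof -
  have T: "regular_triangle X Mor_full i j k"
    unfolding regular_triangle_def using I by (simp add: X_nonempty regular_homs_Mor_full)
  consider "i = j" | "j = k" | "k = i" | "i \<noteq> j" "j \<noteq> k" "k \<noteq> i" by blast
  then show ?thesis
  proof cases
    case 1
    then show ?thesis using comp_closed_Mor_full_loop I by simp
  next
    case 2
    then show ?thesis
      by (intro comp_closed_from_perm[OF T, of j k i]) (simp_all add: triple_perms_def comp_closed_Mor_full_loop I)
  next
    case 3
    then show ?thesis
      by (intro comp_closed_from_perm[OF T, of k i j]) (simp_all add: triple_perms_def comp_closed_Mor_full_loop I)
  next
    case 4
    then show ?thesis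
      using comp_closed_Mor_sym_distinct[OF I] by (simp add: Mor_full_def comp_closed_def)
  qed
qed

lemma Mor_full_R:
  assumes ij: "(i, j) \<in> R" shows "Mor_full i j = Mor i j"
proof (cases "i = j")
  case False
  then show ?thesis by (simp add: Mor_full_def Mor_sym_R[OF ij])
next
  case True
  then have ii: "(i, i) \<in> R" using ij by simp
  have i: "i \<in> I" using R_subset ii by blast
  have "Mor i i \<subseteq> Mor_diag i"
  proof
    fix g assume g: "g \<in> Mor i i"
    show "g \<in> Mor_diag i"
    proof (rule Mor_diagI)
      show "g \<in> ext_bij (X i) (X i)" using simply_transitive_ext_bij[OF Mor_simply_transitive[OF ii] g] .
      fix k a assume k: "k \<in> I" "k \<noteq> i" and a: "a \<in> Mor_sym i k"
      have "comp_closed X Mor_sym i i k"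
        using comp_closed_Mor_sym ii off_diag_in_sym_closure[OF i k(1)] k(2) by auto
      then show "compose (X i) a g \<in> Mor_sym i k"
        using g a by (simp add: comp_closed_def Mor_sym_R[OF ii])
    qed
  qed
  then have "Mor i i = Mor_diag i"
    by (rule simply_transitive_subset_eq[OF X_nonempty[OF i] Mor_simply_transitive[OF ii]
          simply_transitive_Mor_diag[OF i]])
  then show ?thesis using True by (simp add: Mor_full_def)
qed

lemma extends_to_groupoid: "extends_to_groupoid I lt X R Mor"
  unfolding extends_to_groupoid_def extends_to_def
proof (intro exI[of _ Mor_full] conjI)
  show "\<forall>(i, j)\<in>R. Mor_full i j = Mor i j" using Mor_full_R by blast
  show "groupoid_spine I lt X (I \<times> I) Mor_full"
    by (rule groupoid_spineI[OF lt_strict_linear X_nonempty _ _ _ regular_homs_Mor_full comp_closed_Mor_full])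
      (use R_nonempty R_subset in auto)
qed

end

lemma third_index_if_card_ge_3:
  assumes "infinite I \<or> 3 \<le> card I" and "i \<in> I" "j \<in> I"
  shows "\<exists>l\<in>I. l \<noteq> i \<and> l \<noteq> j"
proof (rule ccontr)
  assume "\<not> (\<exists>l\<in>I. l \<noteq> i \<and> l \<noteq> j)"
  then have sub: "I \<subseteq> {i, j}" by blast
  then have "finite I" using finite_subset by blast
  moreover have "card I \<le> 2"
    using card_mono[OF _ sub] by (cases "i = j") simp_all
  ultimately show False using assms(1) by simp
qed

theorem theorem7p7:
  fixes I :: "'i set" and lt :: "'i \<Rightarrow> 'i \<Rightarrow> bool" and X :: "'i \<Rightarrow> 'x set"
    and R :: "('i \<times> 'i) set" and Mor :: "'i \<Rightarrow> 'i \<Rightarrow> ('x \<Rightarrow> 'x) set"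
  assumes "regular_spine I lt X R Mor"
  shows "(\<exists>S. sym S \<and> R \<subseteq> S \<and> S \<subseteq> I \<times> I \<and> extends_to I lt X R Mor S)
       \<and> ((infinite I \<or> 3 \<le> card I) \<longrightarrow> extends_to_groupoid I lt X R Mor)"
proof (intro conjI impI)
  interpret regular_groupoid_spine I lt X R Mor
    by unfold_locales (fact assms)
  show "\<exists>S. sym S \<and> R \<subseteq> S \<and> S \<subseteq> I \<times> I \<and> extends_to I lt X R Mor S"
    by (rule extends_to_sym_closure)
  assume "infinite I \<or> 3 \<le> card I"
  then interpret regular_groupoid_spine_ge3 I lt X R Mor
    by unfold_locales (rule third_index_if_card_ge_3)
  show "extends_to_groupoid I lt X R Mor"
    by (rule extends_to_groupoid)
qed

end
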